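(* Let $V\in\mathcal{UM}$ with $\deg(V,0)=2$, let $\gamma,\bar\gamma\ge0$ with $\gamma+\bar\gamma>0$, and let $U(x)=\gamma W'(x)+\bar\gamma W'(-x)$. If the function $\gamma a+\bar\gamma\bar a:(0,\infty)\to\mathbb R$ has a real-analytic extension to $[0,\infty)$ (i.e. to an open set containing $[0,\infty)$), then $U$ is even. If moreover $V$ is not even, then $\gamma=\bar\gamma$.
   Context: $\mathcal{UM}$: real-analytic $V:\mathbb R\to\mathbb R_{\ge0}$ with $V(0)=0$, $yV'(y)>0$ for $y\neq0$, $V(y)\to\infty$ as $y\to\pm\infty$; $\deg(V,0)$ is the least $m$ with $V^{(m)}(0)\ne0$. For $\deg(V,0)=2$, $V_*$ is the bi-analytic map with $V_*'>0$ and $V_*^2=V$, and $W=V_*^{-1}$. $\bar V(y)=V(-y)$; $V^{-1}$ is the inverse of $V|_{[0,\infty)}$. $a(\theta)=\int_0^{V^{-1}(\theta)}\frac{dy}{\sqrt2\sqrt{\theta-V(y)}}$ and $\bar a(\theta)=\int_0^{\bar V^{-1}(\theta)}\frac{dy}{\sqrt2\sqrt{\theta-\bar V(y)}}$ for $\theta>0$; equivalently $\gamma a(\theta)+\bar\gamma\bar a(\theta)=\frac1{\sqrt2}\int_0^1\frac{U(\sqrt\theta s)}{\sqrt{1-s^2}}ds$. *)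

theory Defs
  imports "HOL-Analysis.Analysis"
begin

definition real_analytic_at :: "(real \<Rightarrow> real) \<Rightarrow> real \<Rightarrow> bool" where
  "real_analytic_at f x \<longleftrightarrow>
     (\<exists>r>0. \<exists>c::nat \<Rightarrow> real. \<forall>y. \<bar>y - x\<bar> < r \<longrightarrow> (\<lambda>n. c n * (y - x) ^ n) sums f y)"

definition real_analytic_on :: "real set \<Rightarrow> (real \<Rightarrow> real) \<Rightarrow> bool" where
  "real_analytic_on S f \<longleftrightarrow> (\<forall>x\<in>S. real_analytic_at f x)"

definition UM :: "(real \<Rightarrow> real) \<Rightarrow> bool" where
  "UM V \<longleftrightarrow> real_analytic_on UNIV V \<and> (\<forall>y. V y \<ge> 0) \<and> V 0 = 0
     \<and> (\<forall>y. y \<noteq> 0 \<longrightarrow> y * deriv V y > 0)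
     \<and> filterlim V at_top at_top \<and> filterlim V at_top at_bot"

definition deg0 :: "(real \<Rightarrow> real) \<Rightarrow> nat" where
  "deg0 V = (LEAST m. (deriv ^^ m) V 0 \<noteq> 0)"

text \<open>V_* (the unique increasing map with V_*^2 = V) and W = V_*^{-1}.\<close>
definition Vstar :: "(real \<Rightarrow> real) \<Rightarrow> real \<Rightarrow> real" where
  "Vstar V y = sgn y * sqrt (V y)"

definition Wfun :: "(real \<Rightarrow> real) \<Rightarrow> real \<Rightarrow> real" where
  "Wfun V = inv (Vstar V)"

definition Vbar :: "(real \<Rightarrow> real) \<Rightarrow> real \<Rightarrow> real" where
  "Vbar V y = V (- y)"

definition Vinv :: "(real \<Rightarrow> real) \<Rightarrow> real \<Rightarrow> real" where
  "Vinv V \<theta> = (THE y. y \<ge> 0 \<and> V y = \<theta>)"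

text \<open>a(\<theta>) as a (Henstock--Kurzweil, hence improper) integral.\<close>
definition afun :: "(real \<Rightarrow> real) \<Rightarrow> real \<Rightarrow> real" where
  "afun V \<theta> = integral {0..Vinv V \<theta>} (\<lambda>y. 1 / (sqrt 2 * sqrt (\<theta> - V y)))"

end

theory Submission
  imports Defs "HOL-Complex_Analysis.Complex_Analysis"
begin

text \<open>The substitution \<open>y = W (sqrt \<theta> * sin \<phi>)\<close>, where \<open>V (W x) = x\<^sup>2\<close>, turns
  \<open>\<gamma> a(\<theta>) + \<gamma>' a'(\<theta>)\<close> into \<open>1/sqrt 2\<close> times the average of \<open>U (sqrt \<theta> * sin \<phi>)\<close> over
  \<open>\<phi> \<in> [0, \<pi>/2]\<close>. Expanding \<open>U\<close> in its Taylor series \<open>\<Sum> u\<^sub>n x\<^sup>n\<close> at \<open>0\<close>, this average at \<open>\<theta> = t\<^sup>2\<close> is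
  \<open>\<Sum> u\<^sub>n c\<^sub>n t\<^sup>n\<close> with Wallis integrals \<open>c\<^sub>n > 0\<close>, whereas the assumed analyticity of
  \<open>\<gamma> a + \<gamma>' a'\<close> at \<open>\<theta> = 0\<close> makes it a power series in \<open>t\<^sup>2\<close>. Hence the odd Taylor coefficients of \<open>U\<close> vanish, so
  \<open>U\<close> is even near \<open>0\<close> and, being analytic on the whole line, even everywhere. If \<open>\<gamma> \<noteq> \<gamma>'\<close>,
  evenness of \<open>U\<close> says that \<open>W'\<close> is even; then \<open>W\<close> and \<open>V\<^sub>*\<close> are odd and \<open>V = V\<^sub>*\<^sup>2\<close> is even.\<close>

section \<open>Real functions with a local holomorphic extension\<close>

text \<open>Real analyticity is handled through local holomorphic extensions, which give access to the
  identity theorem and the inverse function theorem of complex analysis.\<close>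
definition holomorphic_ext_at :: "(real \<Rightarrow> real) \<Rightarrow> real \<Rightarrow> bool" where
  "holomorphic_ext_at f x \<longleftrightarrow> (\<exists>r>0. \<exists>g. g holomorphic_on ball (complex_of_real x) r \<and>
      (\<forall>y. \<bar>y - x\<bar> < r \<longrightarrow> g (of_real y) = of_real (f y)))"

lemma holomorphic_ext_atE:
  assumes "holomorphic_ext_at f x"
  obtains r g where "r > 0" "g holomorphic_on ball (complex_of_real x) r"
    "\<And>y. \<bar>y - x\<bar> < r \<Longrightarrow> g (of_real y) = of_real (f y)"
  using assms unfolding holomorphic_ext_at_def by blast

lemma of_real_in_ball_iff:
  "complex_of_real a \<in> ball (complex_of_real b) r \<longleftrightarrow> \<bar>a - b\<bar> < r"
  by (simp add: dist_of_real dist_real_def abs_minus_commute)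

lemma real_analytic_at_imp_holomorphic_ext:
  assumes "real_analytic_at f x"
  shows "holomorphic_ext_at f x"
proof -
  obtain r c where r: "r > 0"
    and c: "\<And>y. \<bar>y - x\<bar> < r \<Longrightarrow> (\<lambda>n. c n * (y - x) ^ n) sums f y"
    using assms unfolding real_analytic_at_def by blast
  define g where "g w = (\<Sum>n. complex_of_real (c n) * (w - of_real x) ^ n)" for w
  have sums_g: "(\<lambda>n. complex_of_real (c n) * (w - of_real x) ^ n) sums g w"
    if "w \<in> ball (of_real x) r" for w
  proof -
    define \<rho> where "\<rho> = (norm (w - of_real x) + r) / 2"
    have \<rho>: "norm (w - of_real x) < \<rho>" "\<rho> < r"
      using that by (auto simp: \<rho>_def dist_norm norm_minus_commute)
    moreover have "0 < \<rho>"
      using \<rho>(1) norm_ge_zero[of "w - of_real x"] by linarith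
    ultimately have "\<bar>(x + \<rho>) - x\<bar> < r" by simp
    from c[OF this] have "summable (\<lambda>n. c n * \<rho> ^ n)"
      by (simp add: sums_iff)
    then have "summable (\<lambda>n. complex_of_real (c n * \<rho> ^ n))"
      by (rule summable_of_real)
    then have "summable (\<lambda>n. complex_of_real (c n) * (w - of_real x) ^ n)"
      using powser_inside[of "\<lambda>n. complex_of_real (c n)" "of_real \<rho>"] \<rho> by simp
    then show ?thesis unfolding g_def by (simp add: summable_sums)
  qed
  have "g holomorphic_on ball (of_real x) r"
    by (rule power_series_holomorphic) (use sums_g in auto)
  moreover have "g (of_real y) = of_real (f y)" if "\<bar>y - x\<bar> < r" for y
  proof -
    have "(\<lambda>n. complex_of_real (c n * (y - x) ^ n)) sums of_real (f y)"
      using c[OF that] by (subst sums_of_real_iff)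
    moreover have "(\<lambda>n. complex_of_real (c n * (y - x) ^ n)) sums g (of_real y)"
      using sums_g[of "of_real y"] that by (simp add: dist_real_def abs_minus_commute)
    ultimately show ?thesis using sums_unique2 by blast
  qed
  ultimately show ?thesis unfolding holomorphic_ext_at_def using r by blast
qed

lemma holomorphic_ext_real_derivative:
  assumes hol: "g holomorphic_on ball (complex_of_real x) r"
    and ext: "\<And>y. \<bar>y - x\<bar> < r \<Longrightarrow> g (of_real y) = of_real (f y)"
    and y: "\<bar>y - x\<bar> < r"
  shows "(f has_real_derivative Re (deriv g (of_real y))) (at y)"
    and "deriv g (of_real y) = of_real (Re (deriv g (of_real y)))"
proof -
  have "(g has_field_derivative deriv g (of_real y)) (at (of_real y))"
    using holomorphic_derivI[OF hol open_ball, of "of_real y"] y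
    by (simp add: dist_real_def abs_minus_commute)
  then have vd: "((\<lambda>t. g (of_real t)) has_vector_derivative deriv g (of_real y)) (at y)"
    using has_vector_derivative_real_field by blast
  have yS: "y \<in> ball x r" using y by (simp add: dist_real_def abs_minus_commute)
  have on_ball: "Re (g (of_real t)) = f t" "Im (g (of_real t)) = 0" if "t \<in> ball x r" for t
    using ext that by (simp_all add: dist_real_def abs_minus_commute)
  show "(f has_real_derivative Re (deriv g (of_real y))) (at y)"
    using has_field_derivative_transform_within_open[OF has_field_derivative_Re[OF vd]
        open_ball yS on_ball(1)] .
  have "((\<lambda>t. 0::real) has_real_derivative Im (deriv g (of_real y))) (at y)"
    using has_field_derivative_transform_within_open[OF has_field_derivative_Im[OF vd]
        open_ball yS on_ball(2)] .
  then have "Im (deriv g (of_real y)) = 0"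
    using DERIV_unique DERIV_const by blast
  then show "deriv g (of_real y) = of_real (Re (deriv g (of_real y)))"
    by (simp add: complex_eq_iff)
qed

lemma holomorphic_ext_higher_deriv:
  assumes hol: "g holomorphic_on ball (complex_of_real x) r"
    and ext: "\<And>y. \<bar>y - x\<bar> < r \<Longrightarrow> g (of_real y) = of_real (f y)"
  shows "\<bar>y - x\<bar> < r \<Longrightarrow> (deriv ^^ n) g (of_real y) = of_real ((deriv ^^ n) f y)"
proof (induction n arbitrary: y)
  case 0
  then show ?case using ext by simp
next
  case (Suc n)
  have hol_n: "(deriv ^^ n) g holomorphic_on ball (of_real x) r"
    by (rule holomorphic_higher_deriv[OF hol open_ball])
  have "((deriv ^^ n) f has_real_derivative Re (deriv ((deriv ^^ n) g) (of_real y))) (at y)"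
    and "deriv ((deriv ^^ n) g) (of_real y) = of_real (Re (deriv ((deriv ^^ n) g) (of_real y)))"
    using holomorphic_ext_real_derivative[OF hol_n Suc.IH Suc.prems] by blast+
  then show ?case by (simp add: DERIV_imp_deriv)
qed

lemma holomorphic_ext_DERIV:
  assumes "holomorphic_ext_at f x"
  shows "(f has_real_derivative deriv f x) (at x)"
proof -
  obtain r g where "r > 0" "g holomorphic_on ball (complex_of_real x) r"
    "\<And>y. \<bar>y - x\<bar> < r \<Longrightarrow> g (of_real y) = of_real (f y)"
    using holomorphic_ext_atE[OF assms] by blast
  from holomorphic_ext_real_derivative(1)[OF this(2,3), of x] \<open>r > 0\<close> show ?thesis
    by (metis DERIV_imp_deriv abs_0 diff_self)
qed

lemma holomorphic_ext_isCont: "holomorphic_ext_at f x \<Longrightarrow> isCont f x"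
  using holomorphic_ext_DERIV DERIV_isCont by blast

lemma holomorphic_ext_deriv:
  assumes "holomorphic_ext_at f x"
  shows "holomorphic_ext_at (deriv f) x"
proof -
  obtain r g where r: "r > 0" and hol: "g holomorphic_on ball (complex_of_real x) r"
    and ext: "\<And>y. \<bar>y - x\<bar> < r \<Longrightarrow> g (of_real y) = of_real (f y)"
    using holomorphic_ext_atE[OF assms] by blast
  have "deriv g holomorphic_on ball (complex_of_real x) r"
    using holomorphic_deriv[OF hol open_ball] .
  moreover have "deriv g (of_real y) = of_real (deriv f y)" if "\<bar>y - x\<bar> < r" for y
    using holomorphic_ext_higher_deriv[OF hol ext that, of 1] by simp
  ultimately show ?thesis unfolding holomorphic_ext_at_def using r by blast
qed

lemma holomorphic_ext_const: "holomorphic_ext_at (\<lambda>_. c) x"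
  unfolding holomorphic_ext_at_def
  by (intro exI[of _ 1] conjI exI[of _ "\<lambda>_. complex_of_real c"]) auto

lemma holomorphic_ext_ident: "holomorphic_ext_at (\<lambda>t. t) x"
  unfolding holomorphic_ext_at_def
  by (intro exI[of _ 1] conjI exI[of _ "\<lambda>z. z"]) auto

lemma holomorphic_ext_at_common_radius:
  assumes "holomorphic_ext_at f x" "holomorphic_ext_at g x"
  obtains r F G where "r > 0"
    "F holomorphic_on ball (complex_of_real x) r" "G holomorphic_on ball (complex_of_real x) r"
    "\<And>y. \<bar>y - x\<bar> < r \<Longrightarrow> F (of_real y) = of_real (f y)"
    "\<And>y. \<bar>y - x\<bar> < r \<Longrightarrow> G (of_real y) = of_real (g y)"
proof -
  obtain r1 F where "r1 > 0" and F: "F holomorphic_on ball (complex_of_real x) r1"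
    and "\<And>y. \<bar>y - x\<bar> < r1 \<Longrightarrow> F (of_real y) = of_real (f y)"
    using holomorphic_ext_atE[OF assms(1)] by blast
  moreover obtain r2 G where "r2 > 0" and G: "G holomorphic_on ball (complex_of_real x) r2"
    and "\<And>y. \<bar>y - x\<bar> < r2 \<Longrightarrow> G (of_real y) = of_real (g y)"
    using holomorphic_ext_atE[OF assms(2)] by blast
  moreover have "F holomorphic_on ball (complex_of_real x) (min r1 r2)"
    "G holomorphic_on ball (complex_of_real x) (min r1 r2)"
    by (auto intro: holomorphic_on_subset[OF F] holomorphic_on_subset[OF G])
  ultimately show ?thesis using that[of "min r1 r2" F G] by simp
qed

lemma holomorphic_ext_lincomb:
  assumes "holomorphic_ext_at f x" "holomorphic_ext_at g x"
  shows "holomorphic_ext_at (\<lambda>y. a * f y + b * g y) x"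
proof -
  obtain r F G where "r > 0" "F holomorphic_on ball (complex_of_real x) r"
    "G holomorphic_on ball (complex_of_real x) r"
    and F: "\<And>y. \<bar>y - x\<bar> < r \<Longrightarrow> F (of_real y) = of_real (f y)"
    and G: "\<And>y. \<bar>y - x\<bar> < r \<Longrightarrow> G (of_real y) = of_real (g y)"
    using holomorphic_ext_at_common_radius[OF assms] by blast
  moreover have "(\<lambda>z. of_real a * F z + of_real b * G z) holomorphic_on ball (complex_of_real x) r"
    by (intro holomorphic_intros) fact+
  moreover have "of_real a * F (of_real y) + of_real b * G (of_real y) = of_real (a * f y + b * g y)"
    if "\<bar>y - x\<bar> < r" for y
    using F[OF that] G[OF that] by simp
  ultimately show ?thesis unfolding holomorphic_ext_at_def by blast
qed

lemma holomorphic_ext_mult: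
  assumes "holomorphic_ext_at f x" "holomorphic_ext_at g x"
  shows "holomorphic_ext_at (\<lambda>y. f y * g y) x"
proof -
  obtain r F G where "r > 0" "F holomorphic_on ball (complex_of_real x) r"
    "G holomorphic_on ball (complex_of_real x) r"
    and F: "\<And>y. \<bar>y - x\<bar> < r \<Longrightarrow> F (of_real y) = of_real (f y)"
    and G: "\<And>y. \<bar>y - x\<bar> < r \<Longrightarrow> G (of_real y) = of_real (g y)"
    using holomorphic_ext_at_common_radius[OF assms] by blast
  moreover have "(\<lambda>z. F z * G z) holomorphic_on ball (complex_of_real x) r"
    by (intro holomorphic_intros) fact+
  moreover have "F (of_real y) * G (of_real y) = of_real (f y * g y)" if "\<bar>y - x\<bar> < r" for y
    using F[OF that] G[OF that] by simp
  ultimately show ?thesis unfolding holomorphic_ext_at_def by blast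
qed

lemma holomorphic_ext_cong:
  assumes "holomorphic_ext_at f x" "e > 0" "\<And>y. \<bar>y - x\<bar> < e \<Longrightarrow> f y = g y"
  shows "holomorphic_ext_at g x"
proof -
  obtain r F where "r > 0" and hol: "F holomorphic_on ball (complex_of_real x) r"
    and F: "\<And>y. \<bar>y - x\<bar> < r \<Longrightarrow> F (of_real y) = of_real (f y)"
    using holomorphic_ext_atE[OF assms(1)] by blast
  have "F holomorphic_on ball (complex_of_real x) (min r e)"
    by (auto intro: holomorphic_on_subset[OF hol])
  moreover have "F (of_real y) = of_real (g y)" if "\<bar>y - x\<bar> < min r e" for y
    using F[of y] assms(3)[of y] that by simp
  moreover have "min r e > 0" using \<open>r > 0\<close> \<open>e > 0\<close> by simp
  ultimately show ?thesis unfolding holomorphic_ext_at_def by blast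
qed

lemma holomorphic_ext_sqrt:
  assumes "holomorphic_ext_at f x" "f x > 0"
  shows "holomorphic_ext_at (\<lambda>y. sqrt (f y)) x"
proof -
  obtain r F where "r > 0" and hol: "F holomorphic_on ball (complex_of_real x) r"
    and F: "\<And>y. \<bar>y - x\<bar> < r \<Longrightarrow> F (of_real y) = of_real (f y)"
    using holomorphic_ext_atE[OF assms(1)] by blast
  have "isCont F (of_real x)"
    using holomorphic_on_imp_continuous_on[OF hol] \<open>r > 0\<close>
    by (simp add: continuous_on_eq_continuous_at)
  then obtain \<delta> where "\<delta> > 0" and \<delta>: "\<And>z. dist z (of_real x) < \<delta> \<Longrightarrow> dist (F z) (F (of_real x)) < f x"
    using \<open>f x > 0\<close> unfolding continuous_at_eps_delta by blast
  define r' where "r' = min r \<delta>"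
  have Re_pos: "Re (F z) > 0" if "z \<in> ball (of_real x) r'" for z
  proof -
    have "dist (F z) (of_real (f x)) < f x"
      using \<delta>[of z] that F[of x] \<open>r > 0\<close> by (simp add: r'_def dist_commute)
    then have "\<bar>Re (F z) - f x\<bar> < f x"
      using abs_Re_le_cmod[of "F z - of_real (f x)"] by (simp add: dist_norm)
    then show ?thesis by linarith
  qed
  have "F holomorphic_on ball (of_real x) r'"
    by (auto intro: holomorphic_on_subset[OF hol] simp: r'_def)
  moreover have "F z \<notin> \<real>\<^sub>\<le>\<^sub>0" if "z \<in> ball (of_real x) r'" for z
    using Re_pos[OF that] by (simp add: complex_nonpos_Reals_iff)
  ultimately have "(\<lambda>z. csqrt (F z)) holomorphic_on ball (of_real x) r'"
    by (intro holomorphic_intros)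
  moreover have "csqrt (F (of_real y)) = of_real (sqrt (f y))" if "\<bar>y - x\<bar> < r'" for y
  proof -
    have "of_real y \<in> ball (complex_of_real x) r'" using that of_real_in_ball_iff by blast
    moreover have "\<bar>y - x\<bar> < r" using that by (simp add: r'_def)
    ultimately have "f y > 0" using Re_pos[of "of_real y"] F[of y] by simp
    then show ?thesis using F[of y] that by (simp add: r'_def)
  qed
  moreover have "r' > 0" using \<open>r > 0\<close> \<open>\<delta> > 0\<close> by (simp add: r'_def)
  ultimately show ?thesis unfolding holomorphic_ext_at_def by blast
qed

lemma holomorphic_ext_reflect:
  assumes "holomorphic_ext_at f (- x)"
  shows "holomorphic_ext_at (\<lambda>y. f (- y)) x"
proof -
  obtain r g where r: "r > 0" and hol: "g holomorphic_on ball (complex_of_real (- x)) r"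
    and ext: "\<And>y. \<bar>y - (- x)\<bar> < r \<Longrightarrow> g (of_real y) = of_real (f y)"
    using holomorphic_ext_atE[OF assms] by blast
  have "uminus ` ball (complex_of_real x) r \<subseteq> ball (complex_of_real (- x)) r"
    by (auto simp: dist_norm norm_minus_commute)
  then have "(g \<circ> uminus) holomorphic_on ball (complex_of_real x) r"
    by (intro holomorphic_on_compose_gen[OF _ hol] holomorphic_intros)
  moreover have "(g \<circ> uminus) (of_real y) = of_real (f (- y))" if "\<bar>y - x\<bar> < r" for y
    using ext[of "- y"] that by simp
  ultimately show ?thesis unfolding holomorphic_ext_at_def using r by blast
qed

lemma holomorphic_ext_Taylor_sums:
  assumes "holomorphic_ext_at f x"
  obtains r where "r > 0"
    "\<And>y. \<bar>y - x\<bar> < r \<Longrightarrow> (\<lambda>n. (deriv ^^ n) f x / fact n * (y - x) ^ n) sums f y"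
proof -
  obtain r g where r: "r > 0" and hol: "g holomorphic_on ball (complex_of_real x) r"
    and ext: "\<And>y. \<bar>y - x\<bar> < r \<Longrightarrow> g (of_real y) = of_real (f y)"
    using holomorphic_ext_atE[OF assms] by blast
  have "(\<lambda>n. (deriv ^^ n) f x / fact n * (y - x) ^ n) sums f y" if y: "\<bar>y - x\<bar> < r" for y
  proof -
    have "(\<lambda>n. (deriv ^^ n) g (of_real x) / fact n * (of_real y - of_real x) ^ n) sums g (of_real y)"
      using holomorphic_power_series[OF hol] y by (simp add: dist_real_def abs_minus_commute)
    moreover have "(deriv ^^ n) g (of_real x) = of_real ((deriv ^^ n) f x)" for n
      using holomorphic_ext_higher_deriv[OF hol ext, of x n] r by simp
    ultimately have "(\<lambda>n. complex_of_real ((deriv ^^ n) f x / fact n * (y - x) ^ n)) sums of_real (f y)"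
      using ext[OF y] by simp
    then show ?thesis by (subst (asm) sums_of_real_iff)
  qed
  with r that show ?thesis by blast
qed

lemma holomorphic_ext_divide_square:
  assumes "holomorphic_ext_at f 0" "f 0 = 0" "deriv f 0 = 0"
  shows "holomorphic_ext_at (\<lambda>t. if t = 0 then (deriv ^^ 2) f 0 / 2 else f t / t ^ 2) 0"
proof -
  obtain r g where "r > 0" and hol: "g holomorphic_on ball 0 r"
    and ext: "\<And>y. \<bar>y\<bar> < r \<Longrightarrow> g (of_real y) = of_real (f y)"
    using holomorphic_ext_atE[OF assms(1)] by (metis diff_zero of_real_0)
  define a where "a n = (deriv ^^ n) g 0 / fact n" for n
  have a_real: "a n = of_real ((deriv ^^ n) f 0 / fact n)" for n
    using holomorphic_ext_higher_deriv[of g 0 r f 0 n] hol ext \<open>r > 0\<close> by (simp add: a_def)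
  have a0: "a 0 = 0" and a1: "a 1 = 0"
    using assms(2,3) by (simp_all add: a_real)
  define h where "h z = (if z = 0 then a 2 else g z / z ^ 2)" for z
  have "(\<lambda>n. a (n + 2) * (z - 0) ^ n) sums h z" if "z \<in> ball 0 r" for z
  proof (cases "z = 0")
    case True
    then show ?thesis using powser_sums_zero[of "\<lambda>n. a (n + 2)"] by (simp add: h_def numeral_2_eq_2)
  next
    case False
    have "(\<lambda>n. a n * z ^ n) sums g z"
      using holomorphic_power_series[OF hol that] by (simp add: a_def)
    moreover have "a i * z ^ i = 0" if "i < 2" for i
      using that a0 a1 less_2_cases by auto
    ultimately have "(\<lambda>n. a (n + 2) * z ^ (n + 2)) sums g z"
      using sums_zero_iff_shift[of 2 "\<lambda>n. a n * z ^ n" "g z"] by simp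
    then have "(\<lambda>n. a (n + 2) * z ^ (n + 2) / z ^ 2) sums (g z / z ^ 2)"
      by (rule sums_divide)
    moreover have "(\<lambda>n. a (n + 2) * z ^ (n + 2) / z ^ 2) = (\<lambda>n. a (n + 2) * (z - 0) ^ n)"
      using False by (simp add: power2_eq_square fun_eq_iff)
    ultimately show ?thesis using False by (simp add: h_def)
  qed
  then have "h holomorphic_on ball (complex_of_real 0) r"
    using power_series_holomorphic[of 0 r "\<lambda>n. a (n + 2)" h] by simp
  moreover have "h (of_real t) = of_real (if t = 0 then (deriv ^^ 2) f 0 / 2 else f t / t ^ 2)"
    if "\<bar>t - 0\<bar> < r" for t
    using ext[of t] that by (simp add: h_def a_real)
  ultimately show ?thesis unfolding holomorphic_ext_at_def using \<open>r > 0\<close> by blast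
qed

lemma holomorphic_local_inverse:
  assumes hol: "F holomorphic_on ball \<xi> r" and "r > 0" and "deriv F \<xi> \<noteq> 0"
  obtains r1 \<rho> G where "0 < r1" "r1 \<le> r" "\<rho> > 0" "G holomorphic_on ball (F \<xi>) \<rho>"
    "\<And>z. z \<in> ball \<xi> r1 \<Longrightarrow> G (F z) = z"
proof -
  obtain r1 where "r1 > 0" and r1_le: "ball \<xi> r1 \<subseteq> ball \<xi> r" and inj: "inj_on F (ball \<xi> r1)"
    using has_complex_derivative_locally_injective[OF hol centre_in_ball[THEN iffD2, OF \<open>r > 0\<close>]
        open_ball \<open>deriv F \<xi> \<noteq> 0\<close>] by blast
  have hol1: "F holomorphic_on ball \<xi> r1"
    using holomorphic_on_subset[OF hol r1_le] .
  obtain G where holG: "G holomorphic_on F ` ball \<xi> r1" and GF: "\<And>z. z \<in> ball \<xi> r1 \<Longrightarrow> G (F z) = z"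
    using holomorphic_has_inverse[OF hol1 open_ball inj] by metis
  have "F \<xi> \<in> F ` ball \<xi> r1" using \<open>r1 > 0\<close> by simp
  then obtain \<rho> where "\<rho> > 0" and "ball (F \<xi>) \<rho> \<subseteq> F ` ball \<xi> r1"
    using open_mapping_thm3[OF hol1 open_ball inj] open_contains_ball by blast
  then have "G holomorphic_on ball (F \<xi>) \<rho>"
    using holomorphic_on_subset[OF holG] by blast
  moreover have "r1 \<le> r" using r1_le \<open>r1 > 0\<close> by (simp add: ball_subset_ball_iff)
  ultimately show ?thesis using that \<open>r1 > 0\<close> \<open>\<rho> > 0\<close> GF by blast
qed

lemma holomorphic_ext_inverse:
  assumes f: "holomorphic_ext_at f y" and "deriv f y \<noteq> 0"
    and cont: "isCont g (f y)" and "g (f y) = y" and inv: "\<And>x. f (g x) = x"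
  shows "holomorphic_ext_at g (f y)"
proof -
  obtain r F where "r > 0" and hol: "F holomorphic_on ball (complex_of_real y) r"
    and F: "\<And>t. \<bar>t - y\<bar> < r \<Longrightarrow> F (of_real t) = of_real (f t)"
    using holomorphic_ext_atE[OF f] by blast
  have "\<bar>y - y\<bar> < r" using \<open>r > 0\<close> by simp
  from holomorphic_ext_real_derivative[OF hol F this]
  have "deriv F (of_real y) = of_real (deriv f y)"
    using DERIV_imp_deriv by metis
  then obtain r1 \<rho> G where "0 < r1" "r1 \<le> r" "\<rho> > 0"
    and holG: "G holomorphic_on ball (F (of_real y)) \<rho>"
    and GF: "\<And>z. z \<in> ball (complex_of_real y) r1 \<Longrightarrow> G (F z) = z"
    using holomorphic_local_inverse[OF hol \<open>r > 0\<close>] \<open>deriv f y \<noteq> 0\<close> by auto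
  obtain \<delta> where "\<delta> > 0" and \<delta>: "\<And>x. dist x (f y) < \<delta> \<Longrightarrow> dist (g x) (g (f y)) < r1"
    using cont \<open>r1 > 0\<close> unfolding continuous_at_eps_delta by blast
  have "G holomorphic_on ball (complex_of_real (f y)) (min \<rho> \<delta>)"
    using holomorphic_on_subset[OF holG] F[of y] \<open>r > 0\<close> by (simp add: subset_ball)
  moreover have "G (of_real x) = of_real (g x)" if "\<bar>x - f y\<bar> < min \<rho> \<delta>" for x
  proof -
    have "\<bar>g x - y\<bar> < r1" using \<delta>[of x] that \<open>g (f y) = y\<close> by (simp add: dist_real_def)
    then have "F (of_real (g x)) = of_real x" using F inv \<open>r1 \<le> r\<close> by simp
    moreover have "complex_of_real (g x) \<in> ball (complex_of_real y) r1"
      using \<open>\<bar>g x - y\<bar> < r1\<close> of_real_in_ball_iff by blast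
    ultimately show ?thesis using GF by metis
  qed
  moreover have "min \<rho> \<delta> > 0" using \<open>\<rho> > 0\<close> \<open>\<delta> > 0\<close> by simp
  ultimately show ?thesis unfolding holomorphic_ext_at_def by blast
qed

lemma of_real_islimpt_interval:
  assumes "e > 0"
  shows "complex_of_real x islimpt complex_of_real ` {x - e <..< x + e}"
  unfolding islimpt_approachable
proof (intro allI impI)
  fix \<epsilon> :: real assume "\<epsilon> > 0"
  define s where "s = min \<epsilon> e / 2"
  have s: "0 < s" "s < \<epsilon>" "s < e" using \<open>\<epsilon> > 0\<close> \<open>e > 0\<close> by (auto simp: s_def)
  then have "complex_of_real (x + s) \<in> complex_of_real ` {x - e <..< x + e}"
    by (intro imageI) simp
  moreover have "dist (complex_of_real (x + s)) (complex_of_real x) < \<epsilon>"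
    using s by (simp only: dist_of_real dist_real_def)
  ultimately show "\<exists>z\<in>complex_of_real ` {x - e <..< x + e}.
      z \<noteq> complex_of_real x \<and> dist z (complex_of_real x) < \<epsilon>"
    using s by force
qed

lemma holomorphic_ext_vanishing_at_limit_point:
  assumes "holomorphic_ext_at f x"
    and "x islimpt {y. \<exists>e>0. \<forall>z. \<bar>z - y\<bar> < e \<longrightarrow> f z = 0}"
  shows "\<exists>e>0. \<forall>z. \<bar>z - x\<bar> < e \<longrightarrow> f z = 0"
proof -
  obtain r g where r: "r > 0" and hol: "g holomorphic_on ball (complex_of_real x) r"
    and ext: "\<And>y. \<bar>y - x\<bar> < r \<Longrightarrow> g (of_real y) = of_real (f y)"
    using holomorphic_ext_atE[OF assms(1)] by blast
  obtain x' e where x': "\<bar>x' - x\<bar> < r" and e: "e > 0"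
    and zero_near_x': "\<And>y. \<bar>y - x'\<bar> < e \<Longrightarrow> f y = 0"
    using assms(2) r unfolding islimpt_approachable dist_real_def by blast
  define e' where "e' = min e (r - \<bar>x' - x\<bar>)"
  have e': "e' > 0" using e x' by (simp add: e'_def)
  define Z where "Z = complex_of_real ` {x' - e' <..< x' + e'}"
  have Z_sub: "Z \<subseteq> ball (complex_of_real x) r"
    using x' by (auto simp: Z_def e'_def dist_real_def)
  have g_Z: "g z = 0" if "z \<in> Z" for z
  proof -
    obtain y where y: "z = of_real y" "\<bar>y - x'\<bar> < e'" using \<open>z \<in> Z\<close> by (auto simp: Z_def)
    then have "\<bar>y - x'\<bar> < e" "\<bar>y - x\<bar> < r" by (auto simp: e'_def)
    then show ?thesis using y(1) zero_near_x' ext by simp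
  qed
  have "complex_of_real x' islimpt Z"
    unfolding Z_def using e' by (rule of_real_islimpt_interval)
  moreover have "complex_of_real x' \<in> ball (complex_of_real x) r"
    using x' of_real_in_ball_iff by blast
  ultimately have "g w = 0" if "w \<in> ball (complex_of_real x) r" for w
    using analytic_continuation[OF hol open_ball connected_ball Z_sub _ _ g_Z that] by blast
  then have "\<forall>z. \<bar>z - x\<bar> < r \<longrightarrow> f z = 0"
    using ext by (metis of_real_eq_0_iff of_real_in_ball_iff)
  then show ?thesis using r by blast
qed

lemma holomorphic_ext_zero_if_zero_near_0:
  assumes hol: "\<And>x. holomorphic_ext_at f x" and "e > 0"
    and zero: "\<And>y. \<bar>y\<bar> < e \<Longrightarrow> f y = 0"
  shows "f x = 0"
proof -
  define A where "A = {y. \<exists>e>0. \<forall>z. \<bar>z - y\<bar> < e \<longrightarrow> f z = 0}"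
  have "open A" unfolding open_dist
  proof
    fix y assume "y \<in> A"
    then obtain e where "e > 0" "\<And>z. \<bar>z - y\<bar> < e \<Longrightarrow> f z = 0" unfolding A_def by blast
    then have "z \<in> A" if "dist z y < e" for z
      using that unfolding A_def dist_real_def
      by (intro CollectI exI[of _ "e - \<bar>z - y\<bar>"]) auto
    with \<open>e > 0\<close> show "\<exists>e>0. \<forall>z. dist z y < e \<longrightarrow> z \<in> A" by blast
  qed
  moreover have "closed A"
    unfolding closed_limpt
  proof (intro allI impI)
    fix y assume "y islimpt A"
    with holomorphic_ext_vanishing_at_limit_point[OF hol, of y] show "y \<in> A"
      unfolding A_def by simp
  qed
  moreover have "0 \<in> A" unfolding A_def using \<open>e > 0\<close> zero by auto
  ultimately have "x \<in> A" using clopen[of A] by blast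
  then show ?thesis unfolding A_def by force
qed

section \<open>Sine averages of analytic functions\<close>

lemma powser_coeffs_zero_if_zero_at_right:
  fixes d :: "nat \<Rightarrow> real"
  assumes "\<delta> > 0"
    and sums: "\<And>t. \<bar>t\<bar> < \<delta> \<Longrightarrow> (\<lambda>n. d n * t ^ n) sums P t"
    and zero: "\<And>t. 0 < t \<Longrightarrow> t < \<delta> \<Longrightarrow> P t = 0"
  shows "d m = 0"
proof -
  have sums': "\<And>t. norm (t - 0) < \<delta> \<Longrightarrow> (\<lambda>n. d n * (t - 0) ^ n) sums P t"
    using sums by simp
  have "(P \<longlongrightarrow> d 0) (at 0)"
    by (rule powser_limit_0[OF \<open>\<delta> > 0\<close>]) (simp add: sums)
  then have "(P \<longlongrightarrow> d 0) (at_right 0)"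
    by (simp add: filterlim_at_split)
  moreover have "eventually (\<lambda>t. P t = 0) (at_right 0)"
    using eventually_at_right_real[OF \<open>\<delta> > 0\<close>] by eventually_elim (simp add: zero)
  then have "(P \<longlongrightarrow> 0) (at_right 0)"
    by (rule tendsto_eventually)
  ultimately have d0: "d 0 = 0"
    by (rule tendsto_unique[rotated]) simp
  show ?thesis
  proof (rule ccontr)
    assume "d m \<noteq> 0"
    with d0 have "m > 0" by (cases m) auto
    have "P 0 = 0" using sums[of 0] \<open>\<delta> > 0\<close> d0 by (simp add: sums_iff)
    obtain s where "s > 0" and nonzero: "\<And>z. z \<in> cball 0 s - {0} \<Longrightarrow> P z \<noteq> 0"
      using powser_0_nonzero[OF \<open>\<delta> > 0\<close> sums' \<open>P 0 = 0\<close> \<open>d m \<noteq> 0\<close> \<open>m > 0\<close>] by blast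
    define t where "t = min s \<delta> / 2"
    have "0 < t" "t < \<delta>" "t \<le> s" using \<open>s > 0\<close> \<open>\<delta> > 0\<close> by (auto simp: t_def)
    then show False using nonzero[of t] zero[of t] by simp
  qed
qed

definition wallis_integral :: "nat \<Rightarrow> real" where
  "wallis_integral n = integral {0..pi/2} (\<lambda>\<phi>. sin \<phi> ^ n)"

lemma wallis_integral_pos: "wallis_integral n > 0"
proof -
  have integrable: "(\<lambda>\<phi>. sin \<phi> ^ n) integrable_on {a..b}" for a b :: real
    by (intro integrable_continuous_interval continuous_on_power continuous_on_sin continuous_on_id)
  have "0 < integral {pi/6..pi/2} (\<lambda>\<phi>::real. (1/2::real) ^ n)"
    using pi_gt_zero by simp
  also have "\<dots> \<le> integral {pi/6..pi/2} (\<lambda>\<phi>. sin \<phi> ^ n)"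
  proof (rule integral_le[OF _ integrable])
    fix x assume x: "x \<in> {pi/6..pi/2}"
    have "sin (pi/6) \<le> sin x"
      using x pi_gt_zero by (subst sin_mono_le_eq) auto
    then show "(1/2::real) ^ n \<le> sin x ^ n"
      by (intro power_mono) (simp_all add: sin_30)
  qed (rule integrable_const_ivl)
  also have "\<dots> \<le> wallis_integral n"
    unfolding wallis_integral_def
    by (rule integral_subset_le[OF _ integrable integrable])
      (auto simp: pi_ge_zero intro!: zero_le_power sin_ge_zero)
  finally show ?thesis .
qed

text \<open>Termwise integration is justified by dominated convergence, with the constant majorant
  \<open>\<Sum>n. \<bar>u n\<bar> * \<bar>t\<bar> ^ n\<close>.\<close>
lemma sums_integral_powser_sin:
  fixes U :: "real \<Rightarrow> real"
  assumes sums: "\<And>x. \<bar>x\<bar> < r \<Longrightarrow> (\<lambda>n. u n * x ^ n) sums U x" and "\<bar>t\<bar> < r"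
  shows "(\<lambda>n. u n * wallis_integral n * t ^ n) sums integral {0..pi/2} (\<lambda>\<phi>. U (t * sin \<phi>))"
proof -
  define t' where "t' = (\<bar>t\<bar> + r) / 2"
  have "\<bar>t\<bar> < t'" "t' < r" using \<open>\<bar>t\<bar> < r\<close> by (auto simp: t'_def)
  then have "summable (\<lambda>n. u n * t' ^ n)" using sums[of t'] by (auto simp: sums_iff)
  with \<open>\<bar>t\<bar> < t'\<close> have summable_abs: "summable (\<lambda>n. \<bar>u n\<bar> * \<bar>t\<bar> ^ n)"
    using powser_insidea[of u t' "\<bar>t\<bar>"] by (simp add: abs_mult power_abs)
  have sin_le: "\<bar>t * sin \<phi>\<bar> \<le> \<bar>t\<bar>" for \<phi>
    using abs_sin_le_one[of \<phi>] by (simp add: abs_mult mult_left_le)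
  define S where "S k \<phi> = (\<Sum>n<k. u n * (t * sin \<phi>) ^ n)" for k \<phi>
  have S_integrable: "S k integrable_on {0..pi/2}" for k
    unfolding S_def by (intro integrable_continuous_interval continuous_intros)
  have S_bound: "norm (S k \<phi>) \<le> (\<Sum>n. \<bar>u n\<bar> * \<bar>t\<bar> ^ n)" for k \<phi>
  proof -
    have "norm (S k \<phi>) \<le> (\<Sum>n<k. \<bar>u n * (t * sin \<phi>) ^ n\<bar>)"
      unfolding S_def real_norm_def by (rule sum_abs)
    also have "\<dots> \<le> (\<Sum>n<k. \<bar>u n\<bar> * \<bar>t\<bar> ^ n)"
      using sin_le by (intro sum_mono) (simp add: abs_mult power_abs mult_left_mono power_mono)
    also have "\<dots> \<le> (\<Sum>n. \<bar>u n\<bar> * \<bar>t\<bar> ^ n)"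
      by (rule sum_le_suminf[OF summable_abs]) auto
    finally show ?thesis .
  qed
  have "(\<lambda>k. S k \<phi>) \<longlonglongrightarrow> U (t * sin \<phi>)" for \<phi>
    using sums[of "t * sin \<phi>"] sin_le[of \<phi>] \<open>\<bar>t\<bar> < r\<close> unfolding S_def sums_def by simp
  then have "(\<lambda>k. integral {0..pi/2} (S k)) \<longlonglongrightarrow> integral {0..pi/2} (\<lambda>\<phi>. U (t * sin \<phi>))"
    using dominated_convergence(2)[OF S_integrable integrable_const_ivl S_bound] by simp
  moreover have "integral {0..pi/2} (S k) = (\<Sum>n<k. u n * wallis_integral n * t ^ n)" for k
    unfolding S_def wallis_integral_def
    by (subst integral_sum) (auto intro!: integrable_continuous_interval continuous_intros
        simp: power_mult_distrib mult_ac)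
  ultimately show ?thesis unfolding sums_def by simp
qed

lemma real_analytic_at_cmult:
  assumes "real_analytic_at f x"
  shows "real_analytic_at (\<lambda>y. c * f y) x"
proof -
  obtain r a where "r > 0" and sums: "\<And>y. \<bar>y - x\<bar> < r \<Longrightarrow> (\<lambda>n. a n * (y - x) ^ n) sums f y"
    using assms unfolding real_analytic_at_def by blast
  have "(\<lambda>n. (c * a n) * (y - x) ^ n) sums (c * f y)" if "\<bar>y - x\<bar> < r" for y
    using sums_mult[OF sums[OF that], of c] by (simp add: mult.assoc)
  with \<open>r > 0\<close> show ?thesis
    unfolding real_analytic_at_def by (intro exI[of _ r] conjI exI[of _ "\<lambda>n. c * a n"]) auto
qed

lemma sums_powser_square:
  fixes b :: "nat \<Rightarrow> real"
  assumes "(\<lambda>k. b k * (t ^ 2) ^ k) sums s"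
  shows "(\<lambda>n. (if even n then b (n div 2) else 0) * t ^ n) sums s"
proof -
  have "(\<lambda>n. if even n then b (n div 2) * (t ^ 2) ^ (n div 2) else 0) sums s"
    using sums_if[OF sums_zero assms] by simp
  moreover have "(if even n then b (n div 2) * (t ^ 2) ^ (n div 2) else 0)
      = (if even n then b (n div 2) else 0) * t ^ n" for n
    by (cases "even n") (auto elim!: evenE simp: power_mult)
  ultimately show ?thesis by simp
qed

lemma odd_Taylor_coeffs_zero_if_sine_average_analytic:
  assumes U: "holomorphic_ext_at U 0" and F: "real_analytic_at F 0"
    and avg: "\<And>\<theta>. \<theta> > 0 \<Longrightarrow> F \<theta> = integral {0..pi/2} (\<lambda>\<phi>. U (sqrt \<theta> * sin \<phi>))"
    and "odd m"
  shows "(deriv ^^ m) U 0 = 0"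
proof -
  define u where "u n = (deriv ^^ n) U 0 / fact n" for n
  obtain r where "r > 0"
    and "\<And>x. \<bar>x - 0\<bar> < r \<Longrightarrow> (\<lambda>n. (deriv ^^ n) U 0 / fact n * (x - 0) ^ n) sums U x"
    using holomorphic_ext_Taylor_sums[OF U] by blast
  then have U_sums: "\<And>x. \<bar>x\<bar> < r \<Longrightarrow> (\<lambda>n. u n * x ^ n) sums U x"
    by (simp add: u_def)
  obtain \<rho> b where "\<rho> > 0" and "\<And>y. \<bar>y - 0\<bar> < \<rho> \<Longrightarrow> (\<lambda>k. b k * (y - 0) ^ k) sums F y"
    using F unfolding real_analytic_at_def by blast
  then have F_sums: "\<And>y. \<bar>y\<bar> < \<rho> \<Longrightarrow> (\<lambda>k. b k * y ^ k) sums F y"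
    by simp
  define \<delta> where "\<delta> = min r (sqrt \<rho>)"
  define d where "d n = (if even n then b (n div 2) else 0) - u n * wallis_integral n" for n
  have d_sums: "(\<lambda>n. d n * t ^ n) sums (F (t ^ 2) - integral {0..pi/2} (\<lambda>\<phi>. U (t * sin \<phi>)))"
    if "\<bar>t\<bar> < \<delta>" for t
  proof -
    have "\<bar>t\<bar> < sqrt \<rho>" using that by (simp add: \<delta>_def)
    then have "\<bar>t\<bar> ^ 2 < sqrt \<rho> ^ 2" by (intro power_strict_mono) auto
    then have "t ^ 2 < \<rho>" using \<open>\<rho> > 0\<close> by simp
    then have "(\<lambda>n. (if even n then b (n div 2) else 0) * t ^ n) sums F (t ^ 2)"
      using F_sums[of "t ^ 2"] by (intro sums_powser_square) simp
    moreover have "\<bar>t\<bar> < r" using that by (simp add: \<delta>_def)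
    ultimately show ?thesis
      unfolding d_def left_diff_distrib using sums_diff sums_integral_powser_sin[OF U_sums] by blast
  qed
  have "d m = 0"
  proof (rule powser_coeffs_zero_if_zero_at_right)
    show "\<delta> > 0" using \<open>r > 0\<close> \<open>\<rho> > 0\<close> by (simp add: \<delta>_def)
    show "F (t ^ 2) - integral {0..pi/2} (\<lambda>\<phi>. U (t * sin \<phi>)) = 0" if "0 < t" for t
      using avg[of "t ^ 2"] that by simp
  qed (fact d_sums)
  then have "u m * wallis_integral m = 0" using \<open>odd m\<close> by (simp add: d_def)
  then show ?thesis using wallis_integral_pos[of m] by (simp add: u_def)
qed

lemma even_if_sine_average_analytic:
  assumes U: "\<And>x. holomorphic_ext_at U x" and F: "real_analytic_at F 0"
    and avg: "\<And>\<theta>. \<theta> > 0 \<Longrightarrow> F \<theta> = integral {0..pi/2} (\<lambda>\<phi>. U (sqrt \<theta> * sin \<phi>))"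
  shows "U (- x) = U x"
proof -
  define u where "u n = (deriv ^^ n) U 0 / fact n" for n
  have odd_zero: "u n = 0" if "odd n" for n
    using odd_Taylor_coeffs_zero_if_sine_average_analytic[OF U F avg that] by (simp add: u_def)
  obtain r where "r > 0"
    and "\<And>x. \<bar>x - 0\<bar> < r \<Longrightarrow> (\<lambda>n. (deriv ^^ n) U 0 / fact n * (x - 0) ^ n) sums U x"
    using holomorphic_ext_Taylor_sums[OF U] by blast
  then have U_sums: "\<And>x. \<bar>x\<bar> < r \<Longrightarrow> (\<lambda>n. u n * x ^ n) sums U x"
    by (simp add: u_def)
  have even_near_0: "U (- y) - U y = 0" if "\<bar>y\<bar> < r" for y
  proof -
    have "(\<lambda>n. u n * (- y) ^ n) = (\<lambda>n. u n * y ^ n)"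
    proof
      show "u n * (- y) ^ n = u n * y ^ n" for n
        by (cases "even n") (simp_all add: odd_zero)
    qed
    moreover have "(\<lambda>n. u n * (- y) ^ n) sums U (- y)" using U_sums[of "- y"] that by simp
    ultimately have "(\<lambda>n. u n * y ^ n) sums U (- y)" by simp
    then show ?thesis using U_sums[OF that] sums_unique2 by fastforce
  qed
  have "holomorphic_ext_at (\<lambda>y. 1 * U (- y) + (- 1) * U y) x" for x
    by (intro holomorphic_ext_lincomb holomorphic_ext_reflect U)
  then have "1 * U (- x) + (- 1) * U x = 0"
    by (rule holomorphic_ext_zero_if_zero_near_0[OF _ \<open>r > 0\<close>]) (simp add: even_near_0)
  then show ?thesis by simp
qed

section \<open>The class UM and the function \<open>V\<^sub>*\<close>\<close>

lemma UM_holomorphic_ext: "UM V \<Longrightarrow> holomorphic_ext_at V y"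
  unfolding UM_def real_analytic_on_def using real_analytic_at_imp_holomorphic_ext by blast

lemma UM_DERIV: "UM V \<Longrightarrow> (V has_real_derivative deriv V y) (at y)"
  by (rule holomorphic_ext_DERIV[OF UM_holomorphic_ext])

lemma UM_continuous_on: "UM V \<Longrightarrow> continuous_on A V"
  by (intro continuous_at_imp_continuous_on ballI DERIV_isCont[OF UM_DERIV])

lemma UM_pos:
  assumes "UM V" "y \<noteq> 0"
  shows "V y > 0"
proof -
  have "V 0 = 0" and sign: "\<And>z. z \<noteq> 0 \<Longrightarrow> z * deriv V z > 0"
    using assms(1) unfolding UM_def by blast+
  have "\<exists>z. 0 < z * y \<and> V y = y * deriv V z"
  proof (cases "y > 0")
    case True
    obtain z where "0 < z" "V y - V 0 = (y - 0) * deriv V z"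
      using MVT2[OF True UM_DERIV[OF assms(1)]] by blast
    then show ?thesis using True \<open>V 0 = 0\<close> by (intro exI[of _ z]) simp
  next
    case False
    then have "y < 0" using assms(2) by simp
    obtain z where "z < 0" "V 0 - V y = (0 - y) * deriv V z"
      using MVT2[OF \<open>y < 0\<close> UM_DERIV[OF assms(1)]] by blast
    then show ?thesis using \<open>y < 0\<close> \<open>V 0 = 0\<close> by (intro exI[of _ z]) (simp add: mult_neg_neg)
  qed
  then obtain z where zy: "0 < z * y" and V_y: "V y = y * deriv V z" by blast
  moreover have "z \<noteq> 0" using zy by auto
  ultimately have "0 < (z * y) * (z * deriv V z)"
    using sign[of z] by simp
  then have "0 < (z * z) * (y * deriv V z)" by (simp add: mult_ac)
  moreover have "z * z > 0" using zy by (auto simp: zero_less_mult_iff)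
  ultimately show ?thesis using V_y by (simp add: zero_less_mult_iff)
qed

lemma Vstar_square: "UM V \<Longrightarrow> (Vstar V y) ^ 2 = V y"
  unfolding UM_def Vstar_def by (cases "y = 0") (auto simp: power_mult_distrib sgn_if)

lemma Vstar_holomorphic_ext_nonzero:
  assumes "UM V" "y \<noteq> 0"
  shows "holomorphic_ext_at (Vstar V) y"
proof (rule holomorphic_ext_cong)
  show "holomorphic_ext_at (\<lambda>t. sgn y * sqrt (V t)) y"
    using UM_pos[OF assms] UM_holomorphic_ext[OF assms(1)]
    by (intro holomorphic_ext_mult holomorphic_ext_const holomorphic_ext_sqrt)
  show "sgn y * sqrt (V t) = Vstar V t" if "\<bar>t - y\<bar> < \<bar>y\<bar>" for t
    using that by (auto simp: Vstar_def sgn_if)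
qed (use assms in simp)

lemma Vstar_DERIV_nonzero:
  assumes "UM V" "y \<noteq> 0"
  shows "\<exists>d>0. (Vstar V has_real_derivative d) (at y)"
proof -
  have "V y > 0" using UM_pos[OF assms] .
  define d where "d = sgn y * (inverse (sqrt (V y)) / 2 * deriv V y)"
  have "((\<lambda>t. sgn y * sqrt (V t)) has_real_derivative d) (at y)"
    unfolding d_def
    by (intro DERIV_cmult DERIV_chain2[OF DERIV_real_sqrt[OF \<open>V y > 0\<close>] UM_DERIV[OF assms(1)]])
  moreover have "sgn y * sqrt (V t) = Vstar V t" if "t \<in> ball y \<bar>y\<bar>" for t
    using that by (auto simp: Vstar_def dist_real_def sgn_if)
  ultimately have "(Vstar V has_real_derivative d) (at y)"
    using has_field_derivative_transform_within_open[of _ d y "ball y \<bar>y\<bar>"] assms(2) by simp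
  moreover have "y * deriv V y > 0"
    using assms unfolding UM_def by blast
  then have "sgn y * deriv V y > 0"
    by (cases "y > 0") (auto simp: zero_less_mult_iff)
  then have "d > 0"
    unfolding d_def using \<open>V y > 0\<close> by (metis mult.left_commute mult_pos_pos half_gt_zero
        positive_imp_inverse_positive real_sqrt_gt_zero)
  ultimately show ?thesis by blast
qed

lemma UM_deg0_2_derivs:
  assumes "UM V" "deg0 V = 2"
  shows "deriv V 0 = 0" "(deriv ^^ 2) V 0 \<noteq> 0"
proof -
  have "\<exists>m. (deriv ^^ m) V 0 \<noteq> 0"
  proof (rule ccontr)
    assume all_zero: "\<not> (\<exists>m. (deriv ^^ m) V 0 \<noteq> 0)"
    obtain r where "r > 0"
      and "\<And>y. \<bar>y - 0\<bar> < r \<Longrightarrow> (\<lambda>n. (deriv ^^ n) V 0 / fact n * (y - 0) ^ n) sums V y"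
      using holomorphic_ext_Taylor_sums[OF UM_holomorphic_ext[OF assms(1)]] by blast
    then have "(\<lambda>n. 0) sums V (r / 2)" using all_zero by fastforce
    then have "V (r / 2) = 0" using sums_zero sums_unique2 by blast
    with UM_pos[OF assms(1), of "r / 2"] \<open>r > 0\<close> show False by simp
  qed
  then show "(deriv ^^ 2) V 0 \<noteq> 0"
    using LeastI_ex[of "\<lambda>m. (deriv ^^ m) V 0 \<noteq> 0"] assms(2) unfolding deg0_def by simp
  have "(deriv ^^ 1) V 0 = 0"
    using not_less_Least[of 1 "\<lambda>m. (deriv ^^ m) V 0 \<noteq> 0"] assms(2) unfolding deg0_def by simp
  then show "deriv V 0 = 0" by simp
qed

text \<open>\<open>Vstar V t = t * sqrt (q t)\<close> with \<open>q t = V t / t\<^sup>2\<close>, which is analytic at \<open>0\<close> with \<open>q 0 > 0\<close>.\<close>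
lemma Vstar_at_0:
  assumes "UM V" "deg0 V = 2"
  shows "holomorphic_ext_at (Vstar V) 0" "\<exists>d>0. (Vstar V has_real_derivative d) (at 0)"
proof -
  define q where "q t = (if t = 0 then (deriv ^^ 2) V 0 / 2 else V t / t ^ 2)" for t
  have V_nonneg: "V t \<ge> 0" "V 0 = 0" for t
    using assms(1) unfolding UM_def by blast+
  have q: "holomorphic_ext_at q 0"
    unfolding q_def using UM_holomorphic_ext[OF assms(1)] V_nonneg(2) UM_deg0_2_derivs[OF assms]
    by (intro holomorphic_ext_divide_square)
  have "(q \<longlongrightarrow> q 0) (at 0)"
    using holomorphic_ext_isCont[OF q] by (simp add: isCont_def)
  moreover have "eventually (\<lambda>t. q t \<ge> 0) (at 0)"
    using V_nonneg by (auto simp: eventually_at_filter q_def)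
  ultimately have "q 0 \<ge> 0" by (rule tendsto_lowerbound) simp
  moreover have "q 0 \<noteq> 0" using UM_deg0_2_derivs(2)[OF assms] by (simp add: q_def)
  ultimately have "q 0 > 0" by simp
  have Vstar_eq: "Vstar V = (\<lambda>t. t * sqrt (q t))"
  proof
    fix t show "Vstar V t = t * sqrt (q t)"
      by (cases "t = 0") (simp_all add: Vstar_def q_def real_sqrt_divide sgn_if)
  qed
  have sqrt_q: "holomorphic_ext_at (\<lambda>t. sqrt (q t)) 0"
    by (rule holomorphic_ext_sqrt[OF q \<open>q 0 > 0\<close>])
  then show "holomorphic_ext_at (Vstar V) 0"
    unfolding Vstar_eq by (intro holomorphic_ext_mult holomorphic_ext_ident)
  have "((\<lambda>t. t * sqrt (q t)) has_real_derivative 1 * sqrt (q 0) + deriv (\<lambda>t. sqrt (q t)) 0 * 0) (at 0)"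
    by (intro DERIV_mult DERIV_ident holomorphic_ext_DERIV[OF sqrt_q])
  then show "\<exists>d>0. (Vstar V has_real_derivative d) (at 0)"
    using \<open>q 0 > 0\<close> unfolding Vstar_eq by (intro exI[of _ "sqrt (q 0)"]) simp
qed

section \<open>The substitution in \<open>afun\<close>\<close>

lemma integral_eq_if_nn_integral_eq:
  fixes F :: "real \<Rightarrow> real"
  assumes [measurable]: "F \<in> borel_measurable borel"
    and nonneg: "\<And>x. x \<in> {a..b} \<Longrightarrow> F x \<ge> 0"
    and nn: "(\<integral>\<^sup>+x. F x * indicator {a..b} x \<partial>lborel) = ennreal I" and "I \<ge> 0"
  shows "integral {a..b} F = I"
proof -
  have "((\<lambda>x. F x * indicator {a..b} x) has_integral I) UNIV"
    by (rule nn_integral_has_integral[OF _ _ nn \<open>I \<ge> 0\<close>]) (auto simp: indicator_def nonneg)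
  moreover have "(\<lambda>x. F x * indicator {a..b} x) = (\<lambda>x. if x \<in> {a..b} then F x else 0)"
    by (auto simp: indicator_def fun_eq_iff)
  ultimately have "(F has_integral I) {a..b}"
    using has_integral_restrict_UNIV[of "{a..b}" F I] by simp
  then show ?thesis by (rule integral_unique)
qed

text \<open>If \<open>Q (w x) = x\<^sup>2\<close> for an increasing \<open>w\<close>, the substitution \<open>y = w (sqrt \<theta> * sin \<phi>)\<close> turns
  the singular integrand \<open>1 / (sqrt 2 * sqrt (\<theta> - Q y))\<close> into \<open>w' (sqrt \<theta> * sin \<phi>) / sqrt 2\<close>.\<close>
lemma nn_integral_sin_substitution:
  fixes Q w w' :: "real \<Rightarrow> real"
  assumes "\<theta> > 0"
    and w_deriv: "\<And>x. (w has_real_derivative w' x) (at x)"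
    and w'_cont: "\<And>x. isCont w' x"
    and w'_nonneg: "\<And>x. w' x \<ge> 0"
    and Q_w: "\<And>x. 0 \<le> x \<Longrightarrow> x \<le> sqrt \<theta> \<Longrightarrow> Q (w x) = x ^ 2"
    and [measurable]: "Q \<in> borel_measurable borel"
  shows "(\<integral>\<^sup>+y. 1 / (sqrt 2 * sqrt (\<theta> - Q y)) * indicator {w 0..w (sqrt \<theta>)} y \<partial>lborel) =
    ennreal (integral {0..pi/2} (\<lambda>\<phi>. w' (sqrt \<theta> * sin \<phi>) / sqrt 2))"
proof -
  define s where "s = sqrt \<theta>"
  have "s > 0" "s ^ 2 = \<theta>" using \<open>\<theta> > 0\<close> by (simp_all add: s_def)
  define g where "g \<phi> = w (s * sin \<phi>)" for \<phi>
  define g' where "g' \<phi> = w' (s * sin \<phi>) * (s * cos \<phi>)" for \<phi>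
  define F where "F y = 1 / (sqrt 2 * sqrt (\<theta> - Q y))" for y
  have g_deriv: "(g has_real_derivative g' \<phi>) (at \<phi>)" for \<phi>
    unfolding g_def g'_def
    by (rule DERIV_chain2[OF w_deriv]) (auto intro!: derivative_eq_intros)
  have integrand: "F (g \<phi>) * g' \<phi> = w' (s * sin \<phi>) / sqrt 2" if "0 \<le> \<phi>" "\<phi> < pi/2" for \<phi>
  proof -
    have "cos \<phi> > 0" using that by (intro cos_gt_zero_pi) auto
    have "0 \<le> s * sin \<phi>" "s * sin \<phi> \<le> s"
      using that \<open>s > 0\<close> sin_ge_zero[of \<phi>] sin_le_one[of \<phi>] by (auto simp: mult_le_cancel_left1)
    then have "\<theta> - Q (g \<phi>) = (s * cos \<phi>) ^ 2"
      using Q_w[of "s * sin \<phi>"] \<open>s ^ 2 = \<theta>\<close> sin_cos_squared_add[of \<phi>]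
      by (simp add: g_def s_def power_mult_distrib algebra_simps flip: distrib_left)
    then have "sqrt (\<theta> - Q (g \<phi>)) = s * cos \<phi>" using \<open>s > 0\<close> \<open>cos \<phi> > 0\<close> by simp
    then show ?thesis using \<open>s > 0\<close> \<open>cos \<phi> > 0\<close> by (simp add: F_def g'_def)
  qed
  have "((\<lambda>\<phi>. w' (s * sin \<phi>) / sqrt 2) has_integral integral {0..pi/2} (\<lambda>\<phi>. w' (s * sin \<phi>) / sqrt 2))
      {0..pi/2}"
    by (intro integrable_integral integrable_continuous_interval continuous_at_imp_continuous_on ballI
        isCont_o2[OF _ w'_cont] continuous_intros) auto
  note integral_as_nn = nn_integral_has_integral_lebesgue'[OF _ this]
  have "(\<integral>\<^sup>+x. F x * indicator {g 0..g (pi/2)} x \<partial>lborel) =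
        (\<integral>\<^sup>+x. F (g x) * g' x * indicator {0..pi/2} x \<partial>lborel)"
    using \<open>s > 0\<close> cos_ge_zero w'_nonneg
    by (intro nn_integral_substitution[OF _ g_deriv]) (auto simp: F_def g'_def set_borel_measurable_def
        intro!: continuous_intros isCont_o2[OF _ w'_cont] continuous_at_imp_continuous_on)
  also have "\<dots> = (\<integral>\<^sup>+x. w' (s * sin x) / sqrt 2 * indicator {0..pi/2} x \<partial>lborel)"
    using AE_lborel_singleton[of "pi/2"]
    by (intro nn_integral_cong_AE) (auto elim!: eventually_mono simp: indicator_def integrand)
  also have "\<dots> = ennreal (integral {0..pi/2} (\<lambda>\<phi>. w' (s * sin \<phi>) / sqrt 2))"
    using integral_as_nn w'_nonneg by (simp add: indicator_mult_ennreal mult.commute)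
  finally show ?thesis
    by (simp add: g_def F_def s_def)
qed

lemma afun_eq_integral_sin:
  fixes Q w w' :: "real \<Rightarrow> real"
  assumes "\<theta> > 0"
    and "w 0 = 0"
    and w_deriv: "\<And>x. (w has_real_derivative w' x) (at x)"
    and w'_cont: "\<And>x. isCont w' x"
    and w'_nonneg: "\<And>x. w' x \<ge> 0"
    and Q_w: "\<And>x. 0 \<le> x \<Longrightarrow> x \<le> sqrt \<theta> \<Longrightarrow> Q (w x) = x ^ 2"
    and [measurable]: "Q \<in> borel_measurable borel"
    and Vinv_Q: "Vinv Q \<theta> = w (sqrt \<theta>)"
  shows "afun Q \<theta> = integral {0..pi/2} (\<lambda>\<phi>. w' (sqrt \<theta> * sin \<phi>)) / sqrt 2"
proof -
  define F where "F y = 1 / (sqrt 2 * sqrt (\<theta> - Q y))" for y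
  have F_nonneg: "F y \<ge> 0" if y: "y \<in> {0..w (sqrt \<theta>)}" for y
  proof -
    have "continuous_on {0..sqrt \<theta>} w"
      using w_deriv DERIV_continuous_on has_field_derivative_at_within by blast
    then obtain x where "0 \<le> x" "x \<le> sqrt \<theta>" "w x = y"
      using IVT'[of w 0 y "sqrt \<theta>"] y \<open>\<theta> > 0\<close> \<open>w 0 = 0\<close> by auto
    moreover from this have "x ^ 2 \<le> sqrt \<theta> ^ 2" by (intro power_mono)
    ultimately have "Q y \<le> \<theta>"
      using Q_w[of x] \<open>\<theta> > 0\<close> by simp
    then show ?thesis by (simp add: F_def)
  qed
  have "(\<integral>\<^sup>+y. F y * indicator {0..w (sqrt \<theta>)} y \<partial>lborel) =
      ennreal (integral {0..pi/2} (\<lambda>\<phi>. w' (sqrt \<theta> * sin \<phi>) / sqrt 2))"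
    using nn_integral_sin_substitution[OF assms(1,3-7)] \<open>w 0 = 0\<close> by (simp add: F_def)
  moreover have "integral {0..pi/2} (\<lambda>\<phi>. w' (sqrt \<theta> * sin \<phi>) / sqrt 2) \<ge> 0"
    using w'_nonneg by (intro integral_nonneg integrable_continuous_interval continuous_at_imp_continuous_on
        ballI isCont_o2[OF _ w'_cont] continuous_intros) auto
  moreover have "F \<in> borel_measurable borel"
    unfolding F_def by measurable
  ultimately have "integral {0..w (sqrt \<theta>)} F = integral {0..pi/2} (\<lambda>\<phi>. w' (sqrt \<theta> * sin \<phi>) / sqrt 2)"
    using integral_eq_if_nn_integral_eq F_nonneg by blast
  then show ?thesis
    unfolding afun_def Vinv_Q F_def[abs_def] by simp
qed

section \<open>The inverse \<open>W\<close> of \<open>V\<^sub>*\<close>\<close>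

locale UM_deg2 =
  fixes V :: "real \<Rightarrow> real"
  assumes UM: "UM V" and deg: "deg0 V = 2"
begin

abbreviation "Vs \<equiv> Vstar V"
abbreviation "W \<equiv> Wfun V"

lemma Vstar_holomorphic_ext: "holomorphic_ext_at Vs y"
  using Vstar_at_0[OF UM deg] Vstar_holomorphic_ext_nonzero[OF UM] by (cases "y = 0") auto

lemma Vstar_DERIV: "(Vs has_real_derivative deriv Vs y) (at y)"
  and deriv_Vstar_pos: "deriv Vs y > 0"
proof -
  obtain d where "d > 0" "(Vs has_real_derivative d) (at y)"
    using Vstar_at_0(2)[OF UM deg] Vstar_DERIV_nonzero[OF UM] by (cases "y = 0") auto
  then show "(Vs has_real_derivative deriv Vs y) (at y)" "deriv Vs y > 0"
    using DERIV_imp_deriv by auto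
qed

lemma strict_mono_Vstar: "strict_mono Vs"
proof (rule strict_monoI)
  show "Vs a < Vs b" if "a < b" for a b
    by (rule DERIV_pos_imp_increasing[OF that]) (use Vstar_DERIV deriv_Vstar_pos in blast)
qed

lemma Vstar_0: "Vs 0 = 0"
  by (simp add: Vstar_def)

lemma Vstar_surj: "surj Vs"
proof -
  have "\<exists>y. x = Vs y" for x
  proof -
    have "eventually (\<lambda>y. x ^ 2 \<le> V y) at_top" "eventually (\<lambda>y. x ^ 2 \<le> V y) at_bot"
      using UM unfolding UM_def filterlim_at_top by blast+
    then obtain a b where a: "\<And>y. y \<le> a \<Longrightarrow> x ^ 2 \<le> V y" and b: "\<And>y. y \<ge> b \<Longrightarrow> x ^ 2 \<le> V y"
      unfolding eventually_at_top_linorder eventually_at_bot_linorder by blast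
    have "x \<le> sqrt (V (max b 1))" "- sqrt (V (min a (- 1))) \<le> x"
      using real_sqrt_le_mono[OF b[of "max b 1"]] real_sqrt_le_mono[OF a[of "min a (- 1)"]] by auto
    then have "Vs (min a (- 1)) \<le> x" "x \<le> Vs (max b 1)"
      by (simp_all add: Vstar_def)
    moreover have "continuous_on {min a (- 1)..max b 1} Vs"
      by (intro continuous_at_imp_continuous_on ballI DERIV_isCont[OF Vstar_DERIV])
    ultimately show ?thesis
      using IVT'[of Vs "min a (- 1)" x "max b 1"] by force
  qed
  then show ?thesis unfolding surj_def by blast
qed

lemma Vstar_W: "Vs (W x) = x"
  unfolding Wfun_def using Vstar_surj by (simp add: surj_f_inv_f)

lemma W_Vstar: "W (Vs y) = y"
  unfolding Wfun_def using strict_mono_imp_inj_on[OF strict_mono_Vstar] by (simp add: inv_f_f)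

lemma W_0: "W 0 = 0"
  using W_Vstar[of 0] Vstar_0 by simp

lemma V_W: "V (W x) = x ^ 2"
  using Vstar_square[OF UM, of "W x"] Vstar_W by simp

lemma isCont_W: "isCont W x"
proof -
  have "isCont W (Vs (W x))"
    by (rule isCont_inverse_function[where d = 1 and f = Vs])
      (auto simp: W_Vstar intro: DERIV_isCont[OF Vstar_DERIV])
  then show ?thesis by (simp add: Vstar_W)
qed

lemma W_DERIV: "(W has_real_derivative deriv W x) (at x)"
  and deriv_W_pos: "deriv W x > 0"
proof -
  have W_deriv: "(W has_real_derivative inverse (deriv Vs (W x))) (at x)"
    by (rule DERIV_inverse_function[where f = Vs and a = "x - 1" and b = "x + 1"])
      (use Vstar_DERIV deriv_Vstar_pos[of "W x"] Vstar_W isCont_W in auto)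
  then have "deriv W x = inverse (deriv Vs (W x))"
    by (rule DERIV_imp_deriv)
  then show "(W has_real_derivative deriv W x) (at x)" "deriv W x > 0"
    using W_deriv deriv_Vstar_pos[of "W x"] by simp_all
qed

lemma W_holomorphic_ext: "holomorphic_ext_at W x"
  using holomorphic_ext_inverse[OF Vstar_holomorphic_ext _ isCont_W W_Vstar Vstar_W, of "W x"]
    deriv_Vstar_pos[of "W x"] by (simp add: Vstar_W)

lemma deriv_W_holomorphic_ext: "holomorphic_ext_at (deriv W) x"
  by (rule holomorphic_ext_deriv[OF W_holomorphic_ext])

lemma isCont_deriv_W: "isCont (deriv W) x"
  by (rule holomorphic_ext_isCont[OF deriv_W_holomorphic_ext])

lemma W_pos_iff: "W x > 0 \<longleftrightarrow> x > 0"
  using strict_mono_less[OF strict_mono_Vstar, of 0 "W x"] by (simp add: Vstar_W Vstar_0)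

lemma W_neg_iff: "W x < 0 \<longleftrightarrow> x < 0"
  using strict_mono_less[OF strict_mono_Vstar, of "W x" 0] by (simp add: Vstar_W Vstar_0)

lemma Vinv_eq: "\<theta> > 0 \<Longrightarrow> Vinv V \<theta> = W (sqrt \<theta>)"
  unfolding Vinv_def
proof (rule the_equality)
  assume "\<theta> > 0"
  then show "0 \<le> W (sqrt \<theta>) \<and> V (W (sqrt \<theta>)) = \<theta>"
    using W_pos_iff[of "sqrt \<theta>"] by (simp add: V_W)
  fix y assume "0 \<le> y \<and> V y = \<theta>"
  moreover have "V 0 = 0" using UM by (simp add: UM_def)
  ultimately have "Vs y = sqrt \<theta>" using \<open>\<theta> > 0\<close> by (cases "y = 0") (auto simp: Vstar_def)
  then show "y = W (sqrt \<theta>)" using W_Vstar[of y] by simp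
qed

lemma Vinv_Vbar_eq: "\<theta> > 0 \<Longrightarrow> Vinv (Vbar V) \<theta> = - W (- sqrt \<theta>)"
  unfolding Vinv_def
proof (rule the_equality)
  assume "\<theta> > 0"
  then show "0 \<le> - W (- sqrt \<theta>) \<and> Vbar V (- W (- sqrt \<theta>)) = \<theta>"
    using W_neg_iff[of "- sqrt \<theta>"] by (simp add: V_W Vbar_def)
  fix y assume "0 \<le> y \<and> Vbar V y = \<theta>"
  moreover have "V 0 = 0" using UM by (simp add: UM_def)
  ultimately have "Vs (- y) = - sqrt \<theta>"
    using \<open>\<theta> > 0\<close> by (cases "y = 0") (auto simp: Vstar_def Vbar_def)
  then show "y = - W (- sqrt \<theta>)" using W_Vstar[of "- y"] by simp
qed

lemma V_measurable [measurable]: "V \<in> borel_measurable borel"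
  by (rule borel_measurable_continuous_onI[OF UM_continuous_on[OF UM]])

lemma afun_eq: "\<theta> > 0 \<Longrightarrow> afun V \<theta> = integral {0..pi/2} (\<lambda>\<phi>. deriv W (sqrt \<theta> * sin \<phi>)) / sqrt 2"
  by (rule afun_eq_integral_sin[OF _ W_0 W_DERIV isCont_deriv_W less_imp_le[OF deriv_W_pos] V_W
        V_measurable Vinv_eq])

lemma afun_Vbar_eq:
  assumes "\<theta> > 0"
  shows "afun (Vbar V) \<theta> = integral {0..pi/2} (\<lambda>\<phi>. deriv W (- (sqrt \<theta> * sin \<phi>))) / sqrt 2"
proof (rule afun_eq_integral_sin[OF assms])
  show "((\<lambda>x. - W (- x)) has_real_derivative deriv W (- x)) (at x)" for x
    using DERIV_chain2[OF W_DERIV DERIV_minus[OF DERIV_ident]] DERIV_minus by fastforce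
  show "isCont (\<lambda>x. deriv W (- x)) x" for x
    by (intro isCont_o2[OF _ isCont_deriv_W] continuous_intros)
  show "Vbar V \<in> borel_measurable borel"
    unfolding Vbar_def[abs_def] by measurable
  show "Vinv (Vbar V) \<theta> = - W (- sqrt \<theta>)"
    by (rule Vinv_Vbar_eq[OF assms])
qed (use W_0 deriv_W_pos less_imp_le in \<open>auto simp: Vbar_def V_W\<close>)

lemma sine_average_eq:
  assumes "\<theta> > 0"
  shows "sqrt 2 * (\<gamma> * afun V \<theta> + \<gamma>' * afun (Vbar V) \<theta>) =
    integral {0..pi/2} (\<lambda>\<phi>. \<gamma> * deriv W (sqrt \<theta> * sin \<phi>) + \<gamma>' * deriv W (- (sqrt \<theta> * sin \<phi>)))"
proof -
  have "(\<lambda>\<phi>. deriv W (sqrt \<theta> * sin \<phi>)) integrable_on {0..pi/2}"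
    "(\<lambda>\<phi>. deriv W (- (sqrt \<theta> * sin \<phi>))) integrable_on {0..pi/2}"
    by (intro integrable_continuous_interval continuous_at_imp_continuous_on ballI
        isCont_o2[OF _ isCont_deriv_W] continuous_intros)+
  then have "integral {0..pi/2} (\<lambda>\<phi>. \<gamma> * deriv W (sqrt \<theta> * sin \<phi>) + \<gamma>' * deriv W (- (sqrt \<theta> * sin \<phi>)))
      = \<gamma> * integral {0..pi/2} (\<lambda>\<phi>. deriv W (sqrt \<theta> * sin \<phi>))
        + \<gamma>' * integral {0..pi/2} (\<lambda>\<phi>. deriv W (- (sqrt \<theta> * sin \<phi>)))"
    by (subst integral_add) (auto intro: integrable_on_mult_right)
  then show ?thesis
    using afun_eq[OF assms] afun_Vbar_eq[OF assms] by (simp add: algebra_simps)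
qed

lemma V_even_if_deriv_W_even:
  assumes "\<And>x. deriv W (- x) = deriv W x"
  shows "V (- y) = V y"
proof -
  have "((\<lambda>x. W x + W (- x)) has_real_derivative deriv W x + deriv W (- x) * - 1) (at x)" for x
    by (intro DERIV_add DERIV_chain2[OF W_DERIV] W_DERIV derivative_eq_intros) simp_all
  then have "W x + W (- x) = W 0 + W (- 0)" for x
    using assms by (intro DERIV_isconst_all[of "\<lambda>x. W x + W (- x)"]) simp
  then have W_odd: "W (- x) = - W x" for x
    using W_0 by (simp add: add_eq_0_iff)
  have "Vs (- y) = - Vs y"
    using W_odd[of "Vs y"] Vstar_W[of "- Vs y"] by (simp add: W_Vstar)
  then show ?thesis
    using Vstar_square[OF UM, of "- y"] Vstar_square[OF UM, of y] by simp
qed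

end

theorem lemma5:
  fixes V :: "real \<Rightarrow> real" and \<gamma> \<gamma>' :: real and U :: "real \<Rightarrow> real"
  assumes "UM V" and "deg0 V = 2"
    and "\<gamma> \<ge> 0" and "\<gamma>' \<ge> 0" and "\<gamma> + \<gamma>' > 0"
    and "U = (\<lambda>x. \<gamma> * deriv (Wfun V) x + \<gamma>' * deriv (Wfun V) (- x))"
    and "\<exists>S f. open S \<and> {0..} \<subseteq> S \<and> real_analytic_on S f \<and>
           (\<forall>\<theta>>0. f \<theta> = \<gamma> * afun V \<theta> + \<gamma>' * afun (Vbar V) \<theta>)"
  shows "(\<forall>x. U (- x) = U x) \<and> ((\<exists>y. V (- y) \<noteq> V y) \<longrightarrow> \<gamma> = \<gamma>')"
proof -
  interpret UM_deg2 V using assms(1,2) by unfold_locales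
  obtain f where f_analytic: "real_analytic_at f 0"
    and f: "\<And>\<theta>. \<theta> > 0 \<Longrightarrow> f \<theta> = \<gamma> * afun V \<theta> + \<gamma>' * afun (Vbar V) \<theta>"
    using assms(7) unfolding real_analytic_on_def by auto
  have U_hol: "holomorphic_ext_at U x" for x
    unfolding assms(6) by (intro holomorphic_ext_lincomb holomorphic_ext_reflect deriv_W_holomorphic_ext)
  have avg: "sqrt 2 * f \<theta> = integral {0..pi/2} (\<lambda>\<phi>. U (sqrt \<theta> * sin \<phi>))" if "\<theta> > 0" for \<theta>
    using sine_average_eq[OF that] f[OF that] by (simp add: assms(6))
  have U_even: "U (- x) = U x" for x
    by (rule even_if_sine_average_analytic[OF U_hol real_analytic_at_cmult[OF f_analytic] avg])
  have "V (- y) = V y" if "\<gamma> \<noteq> \<gamma>'" for y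
  proof (rule V_even_if_deriv_W_even)
    fix x
    have "(\<gamma> - \<gamma>') * (deriv W (- x) - deriv W x) = 0"
      using U_even[of x] by (simp add: assms(6) algebra_simps)
    then show "deriv W (- x) = deriv W x" using that by simp
  qed
  with U_even show ?thesis by blast
qed

end
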